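(* Let $K\ge2$ and $q\ge 2K^3$. Then there exists a mixture model $\nu=\sum_{k=1}^K p^{(k)}\nu^{(k)}$ on $\mathbb{R}^d$ (satisfying the standing assumptions below), whose components have probability mass functions symmetric about their means, with equal mixing weights (so one may take $\alpha=1$), with $ENR(\nu)=q$, and for which $\beta=\sqrt{q}/2$ satisfies $$\beta\cdot \mathbb{E}_{x\sim\nu}\big[|x_i-\mu_i(x)|\big]\ \ge\ \sqrt{\mathbb{E}_{x\sim\nu}\big[|x_i-\mu_i(x)|^2\big]}\quad\text{for all } i\in[d],$$ such that every decision tree $T$ with $K$ leaves, each of which contains exactly one of the means $\mu^{(k)}$, satisfies $$Price(\nu,T)=\Omega\!\left(\frac{\alpha\beta\log K}{\sqrt{q}}\right).$$
   Context: Standing assumptions on a mixture model: $\nu=\sum_{k=1}^K p^{(k)}\nu^{(k)}$ with $\sum_k p^{(k)}=1$, each $\nu^{(k)}$ a discrete or absolutely continuous probability distribution on $\mathbb{R}^d$ with mean $\mu^{(k)}$ and density/mass function symmetric about $\mu^{(k)}$; all components share finite coordinate-wise variances $\sigma_1^2,\dots,\sigma_d^2>0$; $p^{(k)}\le\alpha/K$ for some $\alpha\ge1$. For $x\sim\nu$ drawn from component $k$, $\mu(x)=\mu^{(k)}$. $ENR(\nu)=\min_{k\ne l}\max_{j\in[d]}|\mu^{(k)}_j-\mu^{(l)}_j|^2/\sigma_j^2$. A decision tree is a binary tree whose internal nodes split by axis-aligned threshold cuts $x_i\le\theta$ vs. $x_i>\theta$, whose leaves partition $\mathbb{R}^d$.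 For $x$, $\tilde\mu(x)$ is a median of the leaf containing $x$ (a minimizer $c$ of $\mathbb{E}[\|x'-c\|_1\mid x'\text{ in that leaf}]$, $x'\sim\nu$), and $Price(\nu,T)=\mathbb{E}_{x\sim\nu}[\|x-\tilde\mu(x)\|_1]/\mathbb{E}_{x\sim\nu}[\|x-\mu(x)\|_1]$. The $\Omega$ hides a universal positive constant independent of $K$ and $q$. *)

theory Defs
  imports "HOL-Probability.Probability"
begin

text \<open>Points of R^d are represented as functions nat => real; only coordinates j < d
  are meaningful (the component distributions are supported on vectors vanishing
  outside {0..<d}).\<close>

type_synonym point = "nat \<Rightarrow> real"

datatype dtree = Leaf | Node nat real dtree dtree

fun leaf_of :: "dtree \<Rightarrow> point \<Rightarrow> bool list" where
  "leaf_of Leaf x = []"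
| "leaf_of (Node i \<theta> l r) x =
     (if x i \<le> \<theta> then False # leaf_of l x else True # leaf_of r x)"

fun leaves :: "dtree \<Rightarrow> bool list set" where
  "leaves Leaf = {[]}"
| "leaves (Node i \<theta> l r) = (Cons False ` leaves l) \<union> (Cons True ` leaves r)"

fun num_leaves :: "dtree \<Rightarrow> nat" where
  "num_leaves Leaf = 1"
| "num_leaves (Node i \<theta> l r) = num_leaves l + num_leaves r"

definition l1 :: "nat \<Rightarrow> point \<Rightarrow> point \<Rightarrow> real" where
  "l1 d x y = (\<Sum>j<d. \<bar>x j - y j\<bar>)"

text \<open>Equal-weight mixture of the components \<nu> 0, ..., \<nu> (K-1), as a joint
  distribution of (component label k, point x).\<close>
definition mixture :: "nat \<Rightarrow> (nat \<Rightarrow> point pmf) \<Rightarrow> (nat \<times> point) pmf" where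
  "mixture K \<nu> = bind_pmf (pmf_of_set {..<K}) (\<lambda>k. map_pmf (\<lambda>x. (k, x)) (\<nu> k))"

definition comp_mean :: "(nat \<Rightarrow> point pmf) \<Rightarrow> nat \<Rightarrow> point" where
  "comp_mean \<nu> k = (\<lambda>j. measure_pmf.expectation (\<nu> k) (\<lambda>x. x j))"

text \<open>Standing assumptions, for equal mixing weights p^(k) = 1/K (so alpha = 1):
  each component is a probability mass function on R^d, with finite coordinate
  variances, symmetric about its mean, and all components share the coordinate
  variances sigma_j^2 > 0.\<close>
definition mixture_model :: "nat \<Rightarrow> nat \<Rightarrow> (nat \<Rightarrow> point pmf) \<Rightarrow> (nat \<Rightarrow> real) \<Rightarrow> bool" where
  "mixture_model d K \<nu> \<sigma> \<longleftrightarrow>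
     d \<ge> 1 \<and> K \<ge> 1 \<and>
     (\<forall>k<K. set_pmf (\<nu> k) \<subseteq> {x. \<forall>j\<ge>d. x j = 0}) \<and>
     (\<forall>k<K. \<forall>j<d. integrable (measure_pmf (\<nu> k)) (\<lambda>x. (x j)\<^sup>2)) \<and>
     (\<forall>k<K. \<forall>x. pmf (\<nu> k) x = pmf (\<nu> k) (\<lambda>j. 2 * comp_mean \<nu> k j - x j)) \<and>
     (\<forall>j<d. \<sigma> j > 0) \<and>
     (\<forall>k<K. \<forall>j<d.
        measure_pmf.expectation (\<nu> k) (\<lambda>x. (x j - comp_mean \<nu> k j)\<^sup>2) = (\<sigma> j)\<^sup>2)"

definition ENR :: "nat \<Rightarrow> nat \<Rightarrow> (nat \<Rightarrow> point pmf) \<Rightarrow> (nat \<Rightarrow> real) \<Rightarrow> real" where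
  "ENR d K \<nu> \<sigma> =
     Min ((\<lambda>(k, l). Max ((\<lambda>j. (comp_mean \<nu> k j - comp_mean \<nu> l j)\<^sup>2 / (\<sigma> j)\<^sup>2) ` {..<d}))
          ` {(k, l). k < K \<and> l < K \<and> k \<noteq> l})"

definition mix_exp :: "nat \<Rightarrow> (nat \<Rightarrow> point pmf) \<Rightarrow> (point \<Rightarrow> point \<Rightarrow> real) \<Rightarrow> real" where
  "mix_exp K \<nu> f = measure_pmf.expectation (mixture K \<nu>) (\<lambda>(k, x). f x (comp_mean \<nu> k))"

text \<open>med assigns to every leaf a median of that leaf: a minimiser c of
  E[ ||x - c||_1 ; x in leaf ] (equivalently, of the conditional expectation given
  the leaf, whenever the leaf has positive mass).\<close>
definition leaf_medians :: "nat \<Rightarrow> nat \<Rightarrow> (nat \<Rightarrow> point pmf) \<Rightarrow> dtree \<Rightarrow> (bool list \<Rightarrow> point) \<Rightarrow> bool" where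
  "leaf_medians d K \<nu> T med \<longleftrightarrow>
     (\<forall>p\<in>leaves T. \<forall>c.
        mix_exp K \<nu> (\<lambda>x _. if leaf_of T x = p then l1 d x (med p) else 0)
        \<le> mix_exp K \<nu> (\<lambda>x _. if leaf_of T x = p then l1 d x c else 0))"

definition price :: "nat \<Rightarrow> nat \<Rightarrow> (nat \<Rightarrow> point pmf) \<Rightarrow> dtree \<Rightarrow> (bool list \<Rightarrow> point) \<Rightarrow> real" where
  "price d K \<nu> T med =
     mix_exp K \<nu> (\<lambda>x _. l1 d x (med (leaf_of T x))) / mix_exp K \<nu> (\<lambda>x m. l1 d x m)"

end

theory Submission
  imports Defs
begin

text \<open>The means are K codewords of the Hadamard code of length d = 2^m, K <= d <= 4K: any two
  differ in exactly d/2 coordinates, each by 1. Every component adds to its mean a rare symmetric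
  shift, either a short move along the all-ones diagonal or a unit move along one axis; the
  probabilities make each coordinate have variance 1/q and mean absolute deviation 2/q, so
  ENR = q and beta = sqrt q / 2. A tree separating the K means has average depth at least ln K,
  and for every split on the path to a mean, the axis move of that mean across the split lands
  in a leaf whose mean is at L1 distance about d/2. These moves have probability 1/(20 q) each,
  so every unit of depth adds about d/(40 q) to the optimal cost 2d/q, giving
  Price >= ln K / 160.\<close>

section \<open>Decision trees\<close>

lemma leaf_of_in_leaves: "leaf_of T x \<in> leaves T"
  by (induction T) auto

lemma leaves_nonempty: "leaves T \<noteq> {}"
  by (induction T) auto

lemma finite_leaves: "finite (leaves T)"
  by (induction T) auto

lemma leaf_of_Node_eq:
  "leaf_of (Node i \<theta> l r) y = (\<not> y i \<le> \<theta>) # leaf_of (if y i \<le> \<theta> then l else r) y"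
  by simp

definition covers_leaves :: "dtree \<Rightarrow> point set \<Rightarrow> bool" where
  "covers_leaves T S \<longleftrightarrow> (\<forall>p\<in>leaves T. \<exists>y\<in>S. leaf_of T y = p)"

lemma covers_leaves_subtree:
  assumes "covers_leaves (Node i \<theta> l r) S"
  shows "covers_leaves (if c then l else r) {y\<in>S. (y i \<le> \<theta>) = c}"
  unfolding covers_leaves_def
proof
  fix p assume "p \<in> leaves (if c then l else r)"
  then have "(\<not> c) # p \<in> leaves (Node i \<theta> l r)" by (cases c) auto
  then obtain y where "y \<in> S" "leaf_of (Node i \<theta> l r) y = (\<not> c) # p"
    using assms by (auto simp: covers_leaves_def)
  then show "\<exists>y\<in>{y\<in>S. (y i \<le> \<theta>) = c}. leaf_of (if c then l else r) y = p"
    unfolding leaf_of_Node_eq by auto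
qed

lemma covers_leaves_Node_side:
  assumes "covers_leaves (Node i \<theta> l r) S"
  obtains y where "y \<in> S" "(y i \<le> \<theta>) = c"
proof -
  obtain p where "p \<in> leaves (if c then l else r)"
    using leaves_nonempty by blast
  then show ?thesis
    using covers_leaves_subtree[OF assms, of c] that by (auto simp: covers_leaves_def)
qed

lemma binary_split_threshold:
  assumes binary: "\<forall>y\<in>S. \<forall>i. y i = 0 \<or> y i = 1"
    and covers: "covers_leaves (Node i \<theta> l r) S"
  shows "0 \<le> \<theta> \<and> \<theta> < 1"
proof -
  obtain y0 y1 where "y0 \<in> S" "y0 i \<le> \<theta>" "y1 \<in> S" "\<not> y1 i \<le> \<theta>"
    using covers_leaves_Node_side[OF covers, of True] covers_leaves_Node_side[OF covers, of False]
    by metis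
  moreover have "y0 i = 0 \<or> y0 i = 1" "y1 i = 0 \<or> y1 i = 1"
    using binary \<open>y0 \<in> S\<close> \<open>y1 \<in> S\<close> by blast+
  ultimately show ?thesis by auto
qed

fun path_coords :: "dtree \<Rightarrow> point \<Rightarrow> nat list" where
  "path_coords Leaf x = []"
| "path_coords (Node i \<theta> l r) x = i # path_coords (if x i \<le> \<theta> then l else r) x"

lemma length_path_coords: "length (path_coords T x) = length (leaf_of T x)"
  by (induction T) auto

lemma path_coords_flip:
  assumes "\<forall>y\<in>S. \<forall>i. y i = 0 \<or> y i = 1" and "covers_leaves T S" and "x \<in> S"
    and "j \<in> set (path_coords T x)"
  shows "leaf_of T (x(j := 1 - x j)) \<noteq> leaf_of T x \<and> (\<exists>y\<in>S. y j \<noteq> x j)"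
  using assms
proof (induction T arbitrary: S)
  case Leaf
  then show ?case by simp
next
  case (Node i \<theta> l r)
  note binary = Node.prems(1) and covers = Node.prems(2) and x = Node.prems(3)
  define c where "c = (x i \<le> \<theta>)"
  define S' where "S' = {y\<in>S. (y i \<le> \<theta>) = c}"
  show ?case
  proof (cases "j = i")
    case True
    have "x i = 0 \<or> x i = 1"
      using binary x by blast
    then have "(1 - x i \<le> \<theta>) \<noteq> c"
      using binary_split_threshold[OF binary covers] unfolding c_def by auto
    moreover obtain y where "y \<in> S" "(y i \<le> \<theta>) = (\<not> c)"
      using covers_leaves_Node_side[OF covers] by metis
    then have "\<exists>y\<in>S. y i \<noteq> x i"
      unfolding c_def by (metis (full_types))
    ultimately show ?thesis
      unfolding True leaf_of_Node_eq c_def by auto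
  next
    case False
    then have j: "j \<in> set (path_coords (if c then l else r) x)"
      using Node.prems(4) by (simp add: c_def)
    have binary': "\<forall>y\<in>S'. \<forall>i. y i = 0 \<or> y i = 1" and x': "x \<in> S'"
      using binary x by (auto simp: S'_def c_def)
    have covers': "covers_leaves (if c then l else r) S'"
      unfolding S'_def by (rule covers_leaves_subtree[OF covers])
    have "leaf_of (if c then l else r) (x(j := 1 - x j)) \<noteq> leaf_of (if c then l else r) x
        \<and> (\<exists>y\<in>S'. y j \<noteq> x j)"
    proof (cases c)
      case True
      show ?thesis
        using Node.IH(1)[OF binary' _ x'] covers' j unfolding if_P[OF True] .
    next
      case False
      show ?thesis
        using Node.IH(2)[OF binary' _ x'] covers' j unfolding if_not_P[OF False] .
    qed
    then show ?thesis
      using False unfolding leaf_of_Node_eq by (auto simp: S'_def c_def)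
  qed
qed

lemma distinct_path_coords:
  assumes "\<forall>y\<in>S. \<forall>i. y i = 0 \<or> y i = 1" and "covers_leaves T S" and "x \<in> S"
  shows "distinct (path_coords T x)"
  using assms
proof (induction T arbitrary: S)
  case Leaf
  then show ?case by simp
next
  case (Node i \<theta> l r)
  note binary = Node.prems(1) and covers = Node.prems(2) and x = Node.prems(3)
  define c where "c = (x i \<le> \<theta>)"
  define S' where "S' = {y\<in>S. (y i \<le> \<theta>) = c}"
  have binary': "\<forall>y\<in>S'. \<forall>i. y i = 0 \<or> y i = 1" and x': "x \<in> S'"
    using binary x by (auto simp: S'_def c_def)
  have covers': "covers_leaves (if c then l else r) S'"
    unfolding S'_def by (rule covers_leaves_subtree[OF covers])
  have "i \<notin> set (path_coords (if c then l else r) x)"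
  proof
    assume "i \<in> set (path_coords (if c then l else r) x)"
    then obtain y where "y \<in> S'" "y i \<noteq> x i"
      using path_coords_flip[OF binary' covers' x'] by blast
    moreover have "y i = 0 \<or> y i = 1" "x i = 0 \<or> x i = 1"
      using binary' \<open>y \<in> S'\<close> x' by blast+
    ultimately show False
      using binary_split_threshold[OF binary covers] by (auto simp: S'_def c_def)
  qed
  moreover have "distinct (path_coords (if c then l else r) x)"
    using Node.IH(1)[OF binary' _ x'] Node.IH(2)[OF binary' _ x'] covers' by (cases c) simp_all
  ultimately show ?case
    by (simp add: c_def)
qed

lemma add_mult_ln_add_le:
  fixes a b :: real
  assumes "0 < a" "0 < b"
  shows "(a + b) * ln (a + b) \<le> a * ln a + b * ln b + (a + b)"
proof -
  have "a * ln ((a + b) / a) \<le> a * ((a + b) / a - 1)"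
    using assms by (intro mult_left_mono ln_le_minus_one) auto
  moreover have "b * ln ((a + b) / b) \<le> b * ((a + b) / b - 1)"
    using assms by (intro mult_left_mono ln_le_minus_one) auto
  ultimately show ?thesis
    using assms by (simp add: ln_div field_simps)
qed

lemma card_leaves_mult_ln_le_sum_depth:
  "real (card (leaves T)) * ln (real (card (leaves T))) \<le> (\<Sum>p\<in>leaves T. real (length p))"
proof (induction T)
  case Leaf
  show ?case by simp
next
  case (Node i \<theta> l r)
  let ?a = "card (leaves l)" and ?b = "card (leaves r)"
  have pos: "0 < ?a" "0 < ?b"
    using leaves_nonempty finite_leaves by (simp_all add: card_gt_0_iff)
  have disj: "Cons False ` leaves l \<inter> Cons True ` leaves r = {}" by auto
  have card: "card (leaves (Node i \<theta> l r)) = ?a + ?b"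
    using disj finite_leaves by (simp add: card_Un_disjoint card_image)
  have depth: "(\<Sum>p\<in>leaves (Node i \<theta> l r). real (length p))
     = (\<Sum>p\<in>leaves l. real (length p)) + (\<Sum>p\<in>leaves r. real (length p)) + (?a + ?b)"
    using disj finite_leaves by (simp add: sum.union_disjoint sum.reindex sum.distrib)
  show ?case
    using add_mult_ln_add_le[of "real ?a" "real ?b"] pos Node.IH unfolding card depth by simp
qed

section \<open>Hadamard codes\<close>

lemma odd_card_Int_sym_diff_iff:
  assumes "finite A"
  shows "(odd (card (A \<inter> X)) \<noteq> odd (card (A \<inter> Y))) \<longleftrightarrow> odd (card (A \<inter> sym_diff X Y))"
proof -
  have split: "card (A \<inter> (U \<union> V)) = card (A \<inter> U) + card (A \<inter> V)" if "U \<inter> V = {}" for U V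
    using that assms by (subst card_Un_disjoint[symmetric]) (auto intro!: arg_cong[where f = card])
  have "card (A \<inter> X) = card (A \<inter> (X \<inter> Y)) + card (A \<inter> (X - Y))"
    using split[of "X \<inter> Y" "X - Y"] by (simp add: Int_Diff_Un Int_Diff_disjoint)
  moreover have "card (A \<inter> Y) = card (A \<inter> (Y \<inter> X)) + card (A \<inter> (Y - X))"
    using split[of "Y \<inter> X" "Y - X"] by (simp add: Int_Diff_Un Int_Diff_disjoint)
  moreover have "Y \<inter> X = X \<inter> Y" by blast
  moreover have "card (A \<inter> sym_diff X Y) = card (A \<inter> (X - Y)) + card (A \<inter> (Y - X))"
    by (rule split) blast
  ultimately show ?thesis by presburger
qed

text \<open>Toggling a fixed element of Z is a parity-reversing involution on Pow M.\<close>
lemma card_Pow_odd_Int: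
  assumes "finite M" "Z \<subseteq> M" "Z \<noteq> {}"
  shows "2 * card {A \<in> Pow M. odd (card (A \<inter> Z))} = 2 ^ card M"
proof -
  obtain e where e: "e \<in> Z" using assms by auto
  define toggle where "toggle A = (if e \<in> A then A - {e} else insert e A)" for A
  let ?odd = "{A \<in> Pow M. odd (card (A \<inter> Z))}" and ?even = "{A \<in> Pow M. even (card (A \<inter> Z))}"
  have fin: "finite (A \<inter> Z)" for A using assms finite_subset by blast
  have parity: "odd (card (toggle A \<inter> Z)) \<longleftrightarrow> even (card (A \<inter> Z))" for A
  proof (cases "e \<in> A")
    case True
    then have "toggle A \<inter> Z = (A \<inter> Z) - {e}" by (auto simp: toggle_def)
    moreover have "card (A \<inter> Z) = Suc (card ((A \<inter> Z) - {e}))"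
      using True e fin by (intro card.remove) auto
    ultimately have "card (A \<inter> Z) = Suc (card (toggle A \<inter> Z))" by simp
    then show ?thesis by simp
  next
    case False
    then have "toggle A \<inter> Z = insert e (A \<inter> Z)" using e by (auto simp: toggle_def)
    then show ?thesis using False fin by simp
  qed
  have toggle_Pow: "toggle A \<in> Pow M \<longleftrightarrow> A \<in> Pow M" for A
    using e assms(2) by (auto simp: toggle_def)
  have toggle_toggle: "toggle (toggle A) = A" for A
    by (auto simp: toggle_def)
  have "bij_betw toggle ?even ?odd"
  proof (rule bij_betwI[where g = toggle])
    show "toggle \<in> ?even \<rightarrow> ?odd"
    proof
      fix A assume "A \<in> ?even"
      then show "toggle A \<in> ?odd" using parity[of A] toggle_Pow[of A] by simp
    qed
    show "toggle \<in> ?odd \<rightarrow> ?even"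
    proof
      fix A assume "A \<in> ?odd"
      then show "toggle A \<in> ?even" using parity[of "toggle A"] toggle_Pow[of A] toggle_toggle[of A] by simp
    qed
  qed (simp_all add: toggle_toggle)
  then have "card ?even = card ?odd" by (rule bij_betw_same_card)
  moreover have "card ?odd + card ?even = card (Pow M)"
    by (subst card_Un_disjoint[symmetric]) (use assms(1) in \<open>auto intro!: arg_cong[where f = card]\<close>)
  ultimately show ?thesis using assms(1) by (simp add: card_Pow)
qed

text \<open>F enumerates the subsets of M, so this is the codeword of S in the Hadamard code of
  length 2^|M|.\<close>
definition hadamard :: "nat \<Rightarrow> (nat \<Rightarrow> nat set) \<Rightarrow> nat set \<Rightarrow> point" where
  "hadamard d F S = (\<lambda>j. if j < d \<and> odd (card (F j \<inter> S)) then 1 else 0)"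

lemma l1_hadamard:
  assumes F: "bij_betw F {..<d} (Pow M)" and M: "finite M"
    and S: "S \<subseteq> M" "S' \<subseteq> M" "S \<noteq> S'"
  shows "l1 d (hadamard d F S) (hadamard d F S') = real d / 2"
proof -
  let ?odd = "\<lambda>A. odd (card (A \<inter> sym_diff S S'))"
  have F_fin: "finite (F j)" if "j < d" for j
    using F that M by (auto simp: bij_betw_def intro: finite_subset)
  have coordinate: "\<bar>hadamard d F S j - hadamard d F S' j\<bar> = of_bool (?odd (F j))"
    if "j < d" for j
  proof -
    have "\<bar>hadamard d F S j - hadamard d F S' j\<bar>
        = of_bool (odd (card (F j \<inter> S)) \<noteq> odd (card (F j \<inter> S')))"
      using that by (simp add: hadamard_def)
    then show ?thesis
      by (simp only: odd_card_Int_sym_diff_iff[OF F_fin[OF that]])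
  qed
  have "l1 d (hadamard d F S) (hadamard d F S') = (\<Sum>j<d. of_bool (?odd (F j)))"
    unfolding l1_def by (rule sum.cong) (simp_all add: coordinate)
  also have "\<dots> = (\<Sum>A\<in>Pow M. of_bool (?odd A))"
    by (rule sum.reindex_bij_betw[OF F])
  also have "\<dots> = real (card {A \<in> Pow M. ?odd A})"
    using M by (simp add: Collect_conj_eq Pow_def)
  finally have "l1 d (hadamard d F S) (hadamard d F S') = real (card {A \<in> Pow M. ?odd A})" .
  moreover have "2 * card {A \<in> Pow M. ?odd A} = d"
  proof -
    have "sym_diff S S' \<subseteq> M" "sym_diff S S' \<noteq> {}"
      using S by blast+
    moreover have "d = 2 ^ card M"
      using bij_betw_same_card[OF F] M by (simp add: card_Pow)
    ultimately show ?thesis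
      using card_Pow_odd_Int[OF M] by presburger
  qed
  ultimately show ?thesis by linarith
qed

section \<open>The hard mixture\<close>

datatype shift = No_shift | Diag_shift bool | Axis_shift bool nat

text \<open>The constants are tuned so that each coordinate j < d of the displacement has
  E|.| = 2/q and E(.)^2 = 1/q; diag_len < 1/2 keeps a diagonal move nearer to its own mean
  than to any other 0/1 point.\<close>
definition diag_len :: real where
  "diag_len = 9 / 19"

definition diag_prob :: "real \<Rightarrow> real" where
  "diag_prob q = 361 / (90 * q)"

definition axis_prob :: "real \<Rightarrow> real" where
  "axis_prob q = 1 / (10 * q)"

fun shift_weight :: "real \<Rightarrow> nat \<Rightarrow> shift \<Rightarrow> real" where
  "shift_weight q d No_shift = 1 - diag_prob q - real d * axis_prob q"
| "shift_weight q d (Diag_shift s) = diag_prob q / 2"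
| "shift_weight q d (Axis_shift s j) = (if j < d then axis_prob q / 2 else 0)"

fun displacement :: "nat \<Rightarrow> shift \<Rightarrow> point" where
  "displacement d No_shift = (\<lambda>i. 0)"
| "displacement d (Diag_shift s) = (\<lambda>i. if i < d then (if s then diag_len else - diag_len) else 0)"
| "displacement d (Axis_shift s j) = (\<lambda>i. if i = j \<and> i < d then (if s then 1 else - 1) else 0)"

fun negate_shift :: "shift \<Rightarrow> shift" where
  "negate_shift No_shift = No_shift"
| "negate_shift (Diag_shift s) = Diag_shift (\<not> s)"
| "negate_shift (Axis_shift s j) = Axis_shift (\<not> s) j"

lemma negate_shift_negate_shift [simp]: "negate_shift (negate_shift l) = l"
  by (cases l) auto

lemma displacement_negate_shift: "displacement d (negate_shift l) i = - displacement d l i"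
  by (cases l) auto

lemma displacement_outside: "d \<le> i \<Longrightarrow> displacement d l i = 0"
  by (cases l) auto

lemma l1_axis_displacement: "l1 d (displacement d (Axis_shift s j)) (\<lambda>_. 0) = (if j < d then 1 else 0)"
proof -
  have "l1 d (displacement d (Axis_shift s j)) (\<lambda>_. 0) = (\<Sum>i<d. if i = j then 1 else 0)"
    unfolding l1_def by (intro sum.cong refl) auto
  then show ?thesis by simp
qed

lemma l1_diag_displacement: "l1 d (displacement d (Diag_shift s)) (\<lambda>_. 0) = real d * diag_len"
  by (simp add: l1_def diag_len_def)

definition shifts :: "nat \<Rightarrow> shift set" where
  "shifts d = insert No_shift (range Diag_shift \<union> (\<lambda>(s, j). Axis_shift s j) ` (UNIV \<times> {..<d}))"

lemma finite_shifts [simp]: "finite (shifts d)"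
  by (simp add: shifts_def)

lemma No_shift_in_shifts [simp]: "No_shift \<in> shifts d"
  by (simp add: shifts_def)

lemma shift_weight_outside_shifts: "l \<notin> shifts d \<Longrightarrow> shift_weight q d l = 0"
  by (cases l) (auto simp: shifts_def)

lemma sum_shifts:
  "(\<Sum>l\<in>shifts d. f l) =
     f No_shift + (\<Sum>s\<in>UNIV. f (Diag_shift s)) + (\<Sum>s\<in>UNIV. \<Sum>j<d. f (Axis_shift s j))"
proof -
  let ?axis = "(\<lambda>(s, j). Axis_shift s j) ` (UNIV \<times> {..<d})"
  have "(\<Sum>l\<in>shifts d. f l) = f No_shift + (\<Sum>l\<in>range Diag_shift \<union> ?axis. f l)"
    unfolding shifts_def by (rule sum.insert) auto
  also have "(\<Sum>l\<in>range Diag_shift \<union> ?axis. f l) = (\<Sum>l\<in>range Diag_shift. f l) + (\<Sum>l\<in>?axis. f l)"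
    by (rule sum.union_disjoint) auto
  also have "\<dots> = (\<Sum>s\<in>UNIV. f (Diag_shift s)) + (\<Sum>(s, j)\<in>UNIV \<times> {..<d}. f (Axis_shift s j))"
    by (simp add: sum.reindex case_prod_unfold inj_on_def)
  finally show ?thesis by (simp add: sum.cartesian_product add.assoc)
qed

lemma sum_shift_weight: "(\<Sum>l\<in>shifts d. shift_weight q d l) = 1"
  by (simp add: sum_shifts)

locale shift_model =
  fixes q :: real and d :: nat
  assumes q_pos: "0 < q"
    and shift_weights_le_1: "diag_prob q + real d * axis_prob q \<le> 1"
begin

lemma shift_weight_nonneg: "0 \<le> shift_weight q d l"
  using q_pos shift_weights_le_1 by (cases l) (auto simp: diag_prob_def axis_prob_def)

definition shift_pmf :: "shift pmf" where
  "shift_pmf = embed_pmf (shift_weight q d)"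

lemma pmf_shift_pmf: "pmf shift_pmf l = shift_weight q d l"
  unfolding shift_pmf_def
proof (rule pmf_embed_pmf)
  have "(\<integral>\<^sup>+l. ennreal (shift_weight q d l) \<partial>count_space UNIV) = (\<Sum>l\<in>shifts d. ennreal (shift_weight q d l))"
    by (rule nn_integral_count_space') (auto simp: shift_weight_outside_shifts)
  also have "\<dots> = 1"
    using shift_weight_nonneg by (simp add: sum_ennreal sum_shift_weight)
  finally show "(\<integral>\<^sup>+l. ennreal (shift_weight q d l) \<partial>count_space UNIV) = 1" .
qed (rule shift_weight_nonneg)

lemma set_shift_pmf: "set_pmf shift_pmf \<subseteq> shifts d"
  using shift_weight_outside_shifts by (fastforce simp: set_pmf_eq pmf_shift_pmf)

lemma expectation_shift_pmf:
  "measure_pmf.expectation shift_pmf f = (\<Sum>l\<in>shifts d. shift_weight q d l * f l)"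
  by (subst integral_measure_pmf[of "shifts d"])
     (use set_shift_pmf in \<open>auto simp: pmf_shift_pmf mult.commute\<close>)

lemma map_negate_shift_pmf: "map_pmf negate_shift shift_pmf = shift_pmf"
proof (rule pmf_eqI)
  fix l
  have "inj negate_shift" by (metis injI negate_shift_negate_shift)
  then have "pmf (map_pmf negate_shift shift_pmf) l = pmf shift_pmf (negate_shift l)"
    by (metis negate_shift_negate_shift pmf_map_inj')
  also have "\<dots> = pmf shift_pmf l"
    by (cases l) (auto simp: pmf_shift_pmf)
  finally show "pmf (map_pmf negate_shift shift_pmf) l = pmf shift_pmf l" .
qed

lemma expectation_displacement: "measure_pmf.expectation shift_pmf (\<lambda>l. displacement d l j) = 0"
proof -
  have "measure_pmf.expectation shift_pmf (\<lambda>l. displacement d l j)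
      = measure_pmf.expectation (map_pmf negate_shift shift_pmf) (\<lambda>l. displacement d l j)"
    by (simp only: map_negate_shift_pmf)
  also have "\<dots> = - measure_pmf.expectation shift_pmf (\<lambda>l. displacement d l j)"
    by (simp add: displacement_negate_shift)
  finally show ?thesis by simp
qed

lemma expectation_even_displacement:
  fixes g :: "real \<Rightarrow> real"
  assumes "j < d" "g 0 = 0" "\<And>t. g (- t) = g t"
  shows "measure_pmf.expectation shift_pmf (\<lambda>l. g (displacement d l j))
    = diag_prob q * g diag_len + axis_prob q * g 1"
proof -
  have axis: "shift_weight q d (Axis_shift s j') * g (displacement d (Axis_shift s j') j)
      = (if j' = j then axis_prob q / 2 * g 1 else 0)" if "j' < d" for s j'
    using assms that by (cases s) auto
  have axis_sum: "(\<Sum>j'<d. shift_weight q d (Axis_shift s j') * g (displacement d (Axis_shift s j') j))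
      = axis_prob q / 2 * g 1" for s
  proof -
    have "(\<Sum>j'<d. shift_weight q d (Axis_shift s j') * g (displacement d (Axis_shift s j') j))
        = (\<Sum>j'<d. if j' = j then axis_prob q / 2 * g 1 else 0)"
      by (rule sum.cong) (use axis in auto)
    then show ?thesis using \<open>j < d\<close> by simp
  qed
  have "measure_pmf.expectation shift_pmf (\<lambda>l. g (displacement d l j))
      = shift_weight q d No_shift * g (displacement d No_shift j)
        + (\<Sum>s\<in>UNIV. shift_weight q d (Diag_shift s) * g (displacement d (Diag_shift s) j))
        + (\<Sum>s\<in>(UNIV :: bool set). axis_prob q / 2 * g 1)"
    by (simp only: expectation_shift_pmf sum_shifts axis_sum)
  then show ?thesis
    using assms by (simp add: UNIV_bool)
qed

lemma expectation_abs_displacement: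
  "j < d \<Longrightarrow> measure_pmf.expectation shift_pmf (\<lambda>l. \<bar>displacement d l j\<bar>) = 2 / q"
  using expectation_even_displacement[of j abs] q_pos
  by (simp add: diag_prob_def axis_prob_def diag_len_def field_simps)

lemma expectation_displacement_squared:
  "j < d \<Longrightarrow> measure_pmf.expectation shift_pmf (\<lambda>l. (displacement d l j)\<^sup>2) = 1 / q"
  using expectation_even_displacement[of j "\<lambda>t. t\<^sup>2"] q_pos
  by (simp add: diag_prob_def axis_prob_def diag_len_def field_simps power2_eq_square)

lemma expectation_l1_displacement:
  "measure_pmf.expectation shift_pmf (\<lambda>l. l1 d (displacement d l) (\<lambda>_. 0)) = 2 * real d / q"
proof -
  have "measure_pmf.expectation shift_pmf (\<lambda>l. l1 d (displacement d l) (\<lambda>_. 0))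
      = (\<Sum>j<d. \<Sum>l\<in>shifts d. shift_weight q d l * \<bar>displacement d l j\<bar>)"
    by (simp add: expectation_shift_pmf l1_def sum_distrib_left sum.swap[of _ "shifts d"])
  also have "\<dots> = (\<Sum>j<d. 2 / q)"
    by (intro sum.cong refl) (simp flip: expectation_shift_pmf add: expectation_abs_displacement)
  finally show ?thesis by simp
qed

lemma integrable_shift_pmf: "integrable (measure_pmf shift_pmf) (f :: shift \<Rightarrow> real)"
  by (rule integrable_measure_pmf_finite) (use set_shift_pmf in \<open>auto intro: finite_subset\<close>)

lemma expectation_shift_pmf_add_atom:
  "measure_pmf.expectation shift_pmf (\<lambda>l. f l - a + (if l = No_shift then b else 0))
     = measure_pmf.expectation shift_pmf f - a + shift_weight q d No_shift * b"
  by (simp add: expectation_shift_pmf ring_distribs sum.distrib sum_subtractf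
      sum_distrib_right[symmetric] sum_shift_weight if_distrib[of "(*) _"] cong: if_cong)

lemma expectation_indicator_axis_shifts:
  assumes "A \<subseteq> {..<d}"
  shows "measure_pmf.expectation shift_pmf (\<lambda>l. if l \<in> (\<lambda>i. Axis_shift (s i) i) ` A then c else 0)
    = real (card A) * (axis_prob q / 2 * c)"
proof -
  let ?B = "(\<lambda>i. Axis_shift (s i) i) ` A"
  have "measure_pmf.expectation shift_pmf (\<lambda>l. if l \<in> ?B then c else 0)
      = (\<Sum>l\<in>shifts d. if l \<in> ?B then shift_weight q d l * c else 0)"
    by (simp add: expectation_shift_pmf if_distrib[of "(*) _"] cong: if_cong)
  also have "\<dots> = (\<Sum>l\<in>shifts d \<inter> ?B. shift_weight q d l * c)"
    by (rule sum.inter_restrict[symmetric]) simp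
  also have "shifts d \<inter> ?B = ?B"
    using assms by (auto simp: shifts_def)
  also have "(\<Sum>l\<in>?B. shift_weight q d l * c) = (\<Sum>i\<in>A. axis_prob q / 2 * c)"
    by (rule sum.reindex_cong[where l = "\<lambda>i. Axis_shift (s i) i"])
       (use assms in \<open>auto simp: inj_on_def\<close>)
  finally show ?thesis by simp
qed

end

lemma l1_nonneg: "0 \<le> l1 d x y"
  by (simp add: l1_def sum_nonneg)

lemma l1_commute: "l1 d x y = l1 d y x"
  by (simp add: l1_def abs_minus_commute)

lemma l1_triangle: "l1 d x z \<le> l1 d x y + l1 d y z"
  unfolding l1_def sum.distrib[symmetric]
  by (intro sum_mono) (metis abs_triangle_ineq diff_add_cancel add_diff_eq)

lemma mix_exp_eq_average:
  assumes "0 < K" "\<And>k. k < K \<Longrightarrow> finite (set_pmf (\<nu> k))"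
  shows "mix_exp K \<nu> f = (\<Sum>k<K. measure_pmf.expectation (\<nu> k) (\<lambda>x. f x (comp_mean \<nu> k))) / real K"
proof -
  have "mix_exp K \<nu> f = measure_pmf.expectation
      (pmf_of_set {..<K} \<bind> (\<lambda>k. map_pmf (\<lambda>x. (k, x)) (\<nu> k))) (\<lambda>(k, x). f x (comp_mean \<nu> k))"
    by (simp add: mix_exp_def mixture_def)
  also have "\<dots> = (\<Sum>k<K. measure_pmf.expectation (map_pmf (\<lambda>x. (k, x)) (\<nu> k))
      (\<lambda>(k, x). f x (comp_mean \<nu> k)) /\<^sub>R real (card {..<K}))"
    by (rule pmf_expectation_bind_pmf_of_set) (use assms in auto)
  finally show ?thesis by (simp add: sum_divide_distrib divide_inverse_commute sum_distrib_left)
qed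

locale hadamard_mixture =
  fixes q :: real and d m K :: nat and F G :: "nat \<Rightarrow> nat set"
  assumes q_pos: "0 < q" and d_ge_8: "8 \<le> d" and K_ge_2: "2 \<le> K"
    and F_bij: "bij_betw F {..<d} (Pow {..<m})"
    and G_inj: "inj_on G {..<K}" and G_subset: "G ` {..<K} \<subseteq> Pow {..<m}"
    and no_shift_heavy: "real (K + 1) * (diag_prob q + real d * axis_prob q) \<le> 1"
begin

sublocale shift_model q d
proof
  have "0 \<le> real K * (diag_prob q + real d * axis_prob q)"
    using q_pos by (simp add: diag_prob_def axis_prob_def)
  then show "diag_prob q + real d * axis_prob q \<le> 1"
    using no_shift_heavy by (simp add: distrib_right)
qed (rule q_pos)

definition mean :: "nat \<Rightarrow> point" where
  "mean k = hadamard d F (G k)"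

definition sample :: "nat \<Rightarrow> shift \<Rightarrow> point" where
  "sample k l = (\<lambda>i. mean k i + displacement d l i)"

definition component :: "nat \<Rightarrow> point pmf" where
  "component k = map_pmf (sample k) shift_pmf"

lemma mean_binary: "mean k i = 0 \<or> mean k i = 1"
  by (simp add: mean_def hadamard_def)

lemma mean_outside: "d \<le> i \<Longrightarrow> mean k i = 0"
  by (simp add: mean_def hadamard_def)

lemma l1_mean_mean: "k < K \<Longrightarrow> k' < K \<Longrightarrow> k \<noteq> k' \<Longrightarrow> l1 d (mean k) (mean k') = real d / 2"
  unfolding mean_def
  by (rule l1_hadamard[OF F_bij]) (use G_subset G_inj in \<open>auto simp: inj_on_def\<close>)

lemma l1_sample_mean: "l1 d (sample k l) (mean k) = l1 d (displacement d l) (\<lambda>_. 0)"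
  by (simp add: l1_def sample_def)

lemma finite_set_component: "finite (set_pmf (component k))"
  unfolding component_def set_map_pmf
  by (rule finite_imageI, rule finite_subset[OF set_shift_pmf]) simp

lemma comp_mean_component: "comp_mean component k = mean k"
proof
  fix j
  have "comp_mean component k j = (\<Sum>l\<in>shifts d. shift_weight q d l * (mean k j + displacement d l j))"
    by (simp add: comp_mean_def component_def sample_def expectation_shift_pmf)
  also have "\<dots> = (\<Sum>l\<in>shifts d. shift_weight q d l) * mean k j
      + measure_pmf.expectation shift_pmf (\<lambda>l. displacement d l j)"
    by (simp add: expectation_shift_pmf distrib_left sum.distrib sum_distrib_right)
  finally show "comp_mean component k j = mean k j"
    by (simp add: sum_shift_weight expectation_displacement)
qed

lemma mix_exp_component:
  "mix_exp K component f = (\<Sum>k<K. measure_pmf.expectation shift_pmf (\<lambda>l. f (sample k l) (mean k))) / real K"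
  using K_ge_2 finite_set_component
  by (simp add: mix_exp_eq_average comp_mean_component component_def)

lemma mix_exp_const_component:
  assumes "\<And>k. measure_pmf.expectation shift_pmf (\<lambda>l. f (sample k l) (mean k)) = c"
  shows "mix_exp K component f = c"
  using assms K_ge_2 by (simp add: mix_exp_component)

lemma mean_abs_dev_component: "i < d \<Longrightarrow> mix_exp K component (\<lambda>x m. \<bar>x i - m i\<bar>) = 2 / q"
  by (rule mix_exp_const_component) (simp add: sample_def expectation_abs_displacement)

lemma mean_sq_dev_component: "i < d \<Longrightarrow> mix_exp K component (\<lambda>x m. \<bar>x i - m i\<bar>\<^sup>2) = 1 / q"
  by (rule mix_exp_const_component) (simp add: sample_def expectation_displacement_squared)

lemma mean_l1_dev_component: "mix_exp K component (\<lambda>x m. l1 d x m) = 2 * real d / q"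
  by (rule mix_exp_const_component) (simp add: l1_sample_mean expectation_l1_displacement)

lemma scaled_mean_abs_dev_eq_rms_dev:
  assumes "i < d"
  shows "sqrt q / 2 * mix_exp K component (\<lambda>x m. \<bar>x i - m i\<bar>)
     = sqrt (mix_exp K component (\<lambda>x m. \<bar>x i - m i\<bar>\<^sup>2))"
proof -
  have "sqrt q * sqrt q = q"
    using q_pos by simp
  then have "sqrt q / 2 * (2 / q) = sqrt (1 / q)"
    using q_pos by (simp add: real_sqrt_divide field_simps)
  then show ?thesis
    using mean_abs_dev_component[OF assms] mean_sq_dev_component[OF assms] by simp
qed

lemma pmf_component_reflect:
  "pmf (component k) x = pmf (component k) (\<lambda>j. 2 * mean k j - x j)"
proof -
  define reflect where "reflect x = (\<lambda>j. 2 * mean k j - x j)" for x :: point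
  have "inj reflect" by (auto simp: inj_def reflect_def fun_eq_iff)
  have "reflect \<circ> sample k = sample k \<circ> negate_shift"
    by (auto simp: reflect_def sample_def displacement_negate_shift)
  then have "map_pmf reflect (component k) = component k"
    by (metis component_def map_negate_shift_pmf pmf.map_comp)
  then have "pmf (component k) (reflect x) = pmf (map_pmf reflect (component k)) (reflect x)"
    by simp
  also have "\<dots> = pmf (component k) x"
    by (rule pmf_map_inj') (rule \<open>inj reflect\<close>)
  finally show ?thesis by (simp add: reflect_def)
qed

lemma mixture_model_component: "mixture_model d K component (\<lambda>_. sqrt (1 / q))"
proof -
  have "set_pmf (component k) \<subseteq> {x. \<forall>j\<ge>d. x j = 0}" for k
    by (auto simp: component_def sample_def mean_outside displacement_outside)
  moreover have "integrable (measure_pmf (component k)) f" for k and f :: "point \<Rightarrow> real"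
    by (rule integrable_measure_pmf_finite[OF finite_set_component])
  moreover have "measure_pmf.expectation (component k) (\<lambda>x. (x j - comp_mean component k j)\<^sup>2)
      = (sqrt (1 / q))\<^sup>2" if "j < d" for k j
    using that q_pos
    by (simp add: comp_mean_component component_def sample_def expectation_displacement_squared)
  ultimately show ?thesis
    unfolding mixture_model_def
    using d_ge_8 K_ge_2 q_pos pmf_component_reflect by (auto simp: comp_mean_component)
qed

lemma ENR_component: "ENR d K component (\<lambda>_. sqrt (1 / q)) = q"
proof -
  let ?pairs = "{(k, l). k < K \<and> l < K \<and> k \<noteq> l}"
  have "Max ((\<lambda>j. (mean k j - mean l j)\<^sup>2 / (sqrt (1 / q))\<^sup>2) ` {..<d}) = q"
    if kl: "k < K" "l < K" "k \<noteq> l" for k l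
  proof (rule Max_eqI)
    show "y \<le> q" if "y \<in> (\<lambda>j. (mean k j - mean l j)\<^sup>2 / (sqrt (1 / q))\<^sup>2) ` {..<d}" for y
    proof -
      obtain j where y: "y = (mean k j - mean l j)\<^sup>2 * q"
        using \<open>y \<in> _\<close> q_pos by auto
      have "(mean k j - mean l j)\<^sup>2 \<le> 1"
        using mean_binary[of k j] mean_binary[of l j] by auto
      then show ?thesis
        unfolding y using q_pos by (simp add: mult_left_le_one_le)
    qed
    have "\<exists>j<d. mean k j \<noteq> mean l j"
    proof (rule ccontr)
      assume "\<not> (\<exists>j<d. mean k j \<noteq> mean l j)"
      then have "l1 d (mean k) (mean l) = 0" by (simp add: l1_def)
      then show False using l1_mean_mean[OF kl] d_ge_8 by simp
    qed
    then obtain j where "j < d" "mean k j \<noteq> mean l j"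
      by blast
    then show "q \<in> (\<lambda>j. (mean k j - mean l j)\<^sup>2 / (sqrt (1 / q))\<^sup>2) ` {..<d}"
      using q_pos mean_binary[of k j] mean_binary[of l j] by (auto intro!: image_eqI[of _ _ j])
  qed simp
  then have "(\<lambda>(k, l). Max ((\<lambda>j. (comp_mean component k j - comp_mean component l j)\<^sup>2
      / (sqrt (1 / q))\<^sup>2) ` {..<d})) ` ?pairs = {q}"
    using K_ge_2 by (auto simp: comp_mean_component intro!: image_eqI[of _ _ "(0, 1)"])
  then show ?thesis by (simp add: ENR_def)
qed

lemma l1_axis_sample_other_mean:
  assumes "k < K" "k' < K" "k \<noteq> k'"
  shows "real d / 2 - 1 \<le> l1 d (sample k (Axis_shift s j)) (mean k')"
proof -
  have "real d / 2 \<le> l1 d (mean k) (sample k (Axis_shift s j)) + l1 d (sample k (Axis_shift s j)) (mean k')"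
    using l1_triangle l1_mean_mean[OF assms] by metis
  moreover have "l1 d (mean k) (sample k (Axis_shift s j)) \<le> 1"
    unfolding l1_commute[of d "mean k"] l1_sample_mean l1_axis_displacement by simp
  ultimately show ?thesis by simp
qed

lemma l1_sample_own_mean_le:
  assumes "k < K" "k' < K"
  shows "l1 d (sample k l) (mean k) \<le> l1 d (sample k l) (mean k')"
proof (cases l)
  case No_shift
  then have "l1 d (sample k l) (mean k) = 0"
    by (simp add: l1_def sample_def)
  then show ?thesis
    using l1_nonneg[of d "sample k l" "mean k'"] by simp
next
  case (Diag_shift s)
  have "l1 d (sample k l) (mean k) = (\<Sum>i<d. diag_len)"
    by (simp add: Diag_shift l1_sample_mean l1_diag_displacement del: displacement.simps)
  also have "\<dots> \<le> l1 d (sample k l) (mean k')"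
    unfolding l1_def
  proof (rule sum_mono)
    fix i assume "i \<in> {..<d}"
    have "mean k i = 0 \<or> mean k i = 1" "mean k' i = 0 \<or> mean k' i = 1"
      by (rule mean_binary)+
    then show "diag_len \<le> \<bar>sample k l i - mean k' i\<bar>"
      using \<open>i \<in> {..<d}\<close> by (cases s) (auto simp: Diag_shift sample_def diag_len_def)
  qed
  finally show ?thesis .
next
  case (Axis_shift s j)
  show ?thesis
  proof (cases "k = k'")
    case False
    then show ?thesis
      using l1_axis_sample_other_mean[OF assms False, of s j] d_ge_8
      by (simp add: Axis_shift l1_sample_mean l1_axis_displacement del: displacement.simps)
  qed simp
qed

definition flip :: "nat \<Rightarrow> nat \<Rightarrow> shift" where
  "flip k i = Axis_shift (mean k i = 0) i"

lemma sample_flip: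
  assumes "i < d"
  shows "sample k (flip k i) = (mean k)(i := 1 - mean k i)"
  using assms mean_binary[of k i] by (auto simp: sample_def flip_def)

lemma no_shift_weight_ge: "real K \<le> real (K + 1) * shift_weight q d No_shift"
  using no_shift_heavy by (simp add: algebra_simps)

end

section \<open>The price of a separating tree\<close>

locale separating_tree = hadamard_mixture +
  fixes T :: dtree
  assumes separates: "\<forall>p\<in>leaves T. \<exists>!k. k < K \<and> leaf_of T (mean k) = p"
begin

definition owner :: "point \<Rightarrow> nat" where
  "owner x = (THE k. k < K \<and> leaf_of T (mean k) = leaf_of T x)"

lemma owner_spec: "owner x < K \<and> leaf_of T (mean (owner x)) = leaf_of T x"
  unfolding owner_def by (rule theI') (use separates leaf_of_in_leaves in blast)

lemma owner_mean: "k < K \<Longrightarrow> owner (mean k) = k"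
  unfolding owner_def by (rule the1_equality) (use separates leaf_of_in_leaves in auto)

lemma bij_betw_leaf_of_mean: "bij_betw (\<lambda>k. leaf_of T (mean k)) {..<K} (leaves T)"
proof (rule bij_betwI')
  show "(leaf_of T (mean k) = leaf_of T (mean k')) = (k = k')" if "k \<in> {..<K}" "k' \<in> {..<K}" for k k'
    using that by (metis owner_def owner_mean lessThan_iff)
  show "leaf_of T (mean k) \<in> leaves T" for k
    by (rule leaf_of_in_leaves)
  show "\<exists>k\<in>{..<K}. p = leaf_of T (mean k)" if "p \<in> leaves T" for p
    using separates that by force
qed

lemma mult_ln_le_sum_depth_mean: "real K * ln (real K) \<le> (\<Sum>k<K. real (length (leaf_of T (mean k))))"
  using card_leaves_mult_ln_le_sum_depth[of T]
    sum.reindex_bij_betw[OF bij_betw_leaf_of_mean, of "\<lambda>p. real (length p)"]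
    bij_betw_same_card[OF bij_betw_leaf_of_mean]
  by simp

lemma binary_means: "\<forall>y\<in>mean ` {..<K}. \<forall>i. y i = 0 \<or> y i = 1"
  using mean_binary by blast

lemma covers_leaves_means: "covers_leaves T (mean ` {..<K})"
  unfolding covers_leaves_def using separates by blast

lemma card_path_coords_mean:
  "k < K \<Longrightarrow> card (set (path_coords T (mean k))) = length (leaf_of T (mean k))"
  using distinct_path_coords[OF binary_means covers_leaves_means, of "mean k"]
  by (simp add: distinct_card length_path_coords)

lemma path_coords_mean_flip:
  assumes "k < K" "i \<in> set (path_coords T (mean k))"
  shows "i < d" and "owner (sample k (flip k i)) \<noteq> k"
proof -
  have leaf_ne: "leaf_of T ((mean k)(i := 1 - mean k i)) \<noteq> leaf_of T (mean k)"
    and "\<exists>y\<in>mean ` {..<K}. y i \<noteq> mean k i"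
    using path_coords_flip[OF binary_means covers_leaves_means _ assms(2)] assms(1) by auto
  then show "i < d"
    using mean_outside by (metis imageE not_le)
  then show "owner (sample k (flip k i)) \<noteq> k"
    using leaf_ne owner_spec[of "sample k (flip k i)"] by (auto simp: sample_flip)
qed

definition owner_dist :: "nat \<Rightarrow> shift \<Rightarrow> real" where
  "owner_dist k l = l1 d (sample k l) (mean (owner (sample k l)))"

lemma l1_displacement_le_owner_dist: "k < K \<Longrightarrow> l1 d (displacement d l) (\<lambda>_. 0) \<le> owner_dist k l"
  using l1_sample_own_mean_le[of k "owner (sample k l)" l] owner_spec
  by (simp add: owner_dist_def l1_sample_mean)

lemma owner_dist_flip_ge:
  assumes "k < K" "i \<in> set (path_coords T (mean k))"
  shows "real d / 2 - 1 \<le> owner_dist k (flip k i)"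
  using l1_axis_sample_other_mean[OF assms(1)] path_coords_mean_flip[OF assms] owner_spec
  by (simp add: owner_dist_def flip_def)

definition centre_offset :: "(bool list \<Rightarrow> point) \<Rightarrow> nat \<Rightarrow> real" where
  "centre_offset c k = l1 d (mean k) (c (leaf_of T (mean k)))"

lemma cost_ge_owner_dist:
  assumes "k < K"
  shows "owner_dist k l - (\<Sum>k<K. centre_offset c k)
      + (if l = No_shift then (\<Sum>k<K. centre_offset c k) + centre_offset c k else 0)
    \<le> l1 d (sample k l) (c (leaf_of T (sample k l)))"
proof (cases "l = No_shift")
  case True
  then show ?thesis
    using assms by (simp add: owner_dist_def centre_offset_def sample_def owner_mean l1_def)
next
  case False
  let ?x = "sample k l"
  have "owner_dist k l \<le> l1 d ?x (c (leaf_of T ?x)) + l1 d (c (leaf_of T ?x)) (mean (owner ?x))"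
    unfolding owner_dist_def by (rule l1_triangle)
  also have "l1 d (c (leaf_of T ?x)) (mean (owner ?x)) = centre_offset c (owner ?x)"
    using owner_spec[of ?x] by (simp add: centre_offset_def l1_commute)
  also have "\<dots> \<le> (\<Sum>k<K. centre_offset c k)"
    by (rule member_le_sum) (use owner_spec in \<open>auto simp: centre_offset_def l1_nonneg\<close>)
  finally show ?thesis
    using False by simp
qed

text \<open>A leaf centre far from the mean in its leaf does not help: the offset is paid on the
  atom at that mean, which carries almost all the mass of its component.\<close>
lemma sum_owner_dist_le_cost:
  "(\<Sum>k<K. measure_pmf.expectation shift_pmf (owner_dist k))
     \<le> real K * mix_exp K component (\<lambda>x _. l1 d x (c (leaf_of T x)))"
proof -
  let ?t = "centre_offset c" and ?w0 = "shift_weight q d No_shift"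
  let ?cost = "\<lambda>k l. l1 d (sample k l) (c (leaf_of T (sample k l)))"
  have per_component: "measure_pmf.expectation shift_pmf (owner_dist k) - sum ?t {..<K}
      + ?w0 * (sum ?t {..<K} + ?t k) \<le> measure_pmf.expectation shift_pmf (?cost k)" if "k < K" for k
  proof -
    have "measure_pmf.expectation shift_pmf (\<lambda>l. owner_dist k l - sum ?t {..<K}
        + (if l = No_shift then sum ?t {..<K} + ?t k else 0)) \<le> measure_pmf.expectation shift_pmf (?cost k)"
      by (intro integral_mono integrable_shift_pmf cost_ge_owner_dist that)
    then show ?thesis
      by (simp only: expectation_shift_pmf_add_atom)
  qed
  have "(\<Sum>k<K. measure_pmf.expectation shift_pmf (owner_dist k))
      + sum ?t {..<K} * (real (K + 1) * ?w0 - real K)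
      = (\<Sum>k<K. measure_pmf.expectation shift_pmf (owner_dist k) - sum ?t {..<K}
          + ?w0 * (sum ?t {..<K} + ?t k))"
    by (simp add: sum.distrib sum_subtractf sum_distrib_left[symmetric] algebra_simps)
  also have "\<dots> \<le> (\<Sum>k<K. measure_pmf.expectation shift_pmf (?cost k))"
    by (rule sum_mono) (use per_component in auto)
  also have "\<dots> = real K * mix_exp K component (\<lambda>x _. l1 d x (c (leaf_of T x)))"
    using K_ge_2 by (simp add: mix_exp_component)
  finally show ?thesis
    using mult_nonneg_nonneg[OF sum_nonneg[of "{..<K}" ?t] diff_ge_0_iff_ge[THEN iffD2, OF no_shift_weight_ge]]
    by (simp add: centre_offset_def l1_nonneg)
qed

text \<open>Each split on the path to mean k is crossed by one axis move of mean k, which then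
  lands in the leaf of another mean, at distance about d/2.\<close>
lemma expectation_owner_dist_ge:
  assumes "k < K"
  shows "2 * real d / q + axis_prob q / 2 * (real d / 2 - 2) * real (length (leaf_of T (mean k)))
    \<le> measure_pmf.expectation shift_pmf (owner_dist k)"
proof -
  define A where "A = set (path_coords T (mean k))"
  have A_sub: "A \<subseteq> {..<d}"
    using path_coords_mean_flip(1)[OF assms] by (auto simp: A_def)
  have flip_eq: "flip k = (\<lambda>i. Axis_shift (mean k i = 0) i)"
    by (simp add: fun_eq_iff flip_def)
  have pointwise: "l1 d (displacement d l) (\<lambda>_. 0) + (if l \<in> flip k ` A then real d / 2 - 2 else 0)
      \<le> owner_dist k l" for l
  proof (cases "l \<in> flip k ` A")
    case True
    then obtain i where i: "i \<in> A" "l = flip k i" by blast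
    then have "l1 d (displacement d l) (\<lambda>_. 0) = 1"
      using A_sub by (auto simp: flip_def l1_axis_displacement simp del: displacement.simps)
    then show ?thesis
      using owner_dist_flip_ge[OF assms, of i] True i by (simp add: A_def)
  next
    case False
    then show ?thesis
      using l1_displacement_le_owner_dist[OF assms] by simp
  qed
  have "measure_pmf.expectation shift_pmf (\<lambda>l. l1 d (displacement d l) (\<lambda>_. 0)
      + (if l \<in> flip k ` A then real d / 2 - 2 else 0))
      = 2 * real d / q + axis_prob q / 2 * (real d / 2 - 2) * real (length (leaf_of T (mean k)))"
    using expectation_indicator_axis_shifts[OF A_sub] card_path_coords_mean[OF assms]
    by (simp add: integrable_shift_pmf expectation_l1_displacement flip_eq A_def)
  moreover have "measure_pmf.expectation shift_pmf (\<lambda>l. l1 d (displacement d l) (\<lambda>_. 0)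
      + (if l \<in> flip k ` A then real d / 2 - 2 else 0)) \<le> measure_pmf.expectation shift_pmf (owner_dist k)"
    by (intro integral_mono integrable_shift_pmf pointwise)
  ultimately show ?thesis by simp
qed

lemma price_ge: "ln (real K) / 160 \<le> price d K component T c"
proof -
  define cost where "cost = mix_exp K component (\<lambda>x _. l1 d x (c (leaf_of T x)))"
  define gain where "gain = axis_prob q / 2 * (real d / 2 - 2)"
  have gain_nonneg: "0 \<le> gain"
    using q_pos d_ge_8 by (simp add: gain_def axis_prob_def)
  have "real K * (2 * real d / q) + gain * (real K * ln (real K))
      \<le> (\<Sum>k<K. 2 * real d / q + gain * real (length (leaf_of T (mean k))))"
    using mult_left_mono[OF mult_ln_le_sum_depth_mean gain_nonneg]
    by (simp add: sum.distrib sum_distrib_left)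
  also have "\<dots> \<le> (\<Sum>k<K. measure_pmf.expectation shift_pmf (owner_dist k))"
    by (rule sum_mono) (use expectation_owner_dist_ge in \<open>simp add: gain_def mult.assoc\<close>)
  also have "\<dots> \<le> real K * cost"
    unfolding cost_def by (rule sum_owner_dist_le_cost)
  finally have "real K * (2 * real d / q) + real K * (gain * ln (real K)) \<le> real K * cost"
    by (simp add: algebra_simps)
  moreover have "0 \<le> real K * (2 * real d / q)"
    using q_pos by simp
  ultimately have "real K * (gain * ln (real K)) \<le> real K * cost"
    by linarith
  then have "gain * ln (real K) \<le> cost"
    by (rule mult_left_le_imp_le) (use K_ge_2 in simp)
  moreover have "ln (real K) / 160 \<le> gain * ln (real K) / (2 * real d / q)"
    using q_pos d_ge_8 K_ge_2 by (simp add: gain_def axis_prob_def field_simps)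
  moreover have "0 < 2 * real d / q"
    using q_pos d_ge_8 by simp
  ultimately show ?thesis
    unfolding price_def mean_l1_dev_component cost_def[symmetric]
    by (meson divide_right_mono less_imp_le order_trans)
qed

end

lemma exists_power_of_two_between:
  fixes K :: nat
  assumes "2 \<le> K"
  obtains m :: nat where "3 \<le> m" "K \<le> 2 ^ m" "2 ^ m \<le> 4 * K"
proof -
  define m where "m = (LEAST m. K \<le> 2 ^ m)"
  have K_le: "K \<le> 2 ^ m"
    unfolding m_def by (rule LeastI_ex) (use less_exp in \<open>blast intro: less_imp_le\<close>)
  show ?thesis
  proof (cases "m \<le> 3")
    case True
    then show ?thesis
      using that[of 3] K_le assms power_increasing[OF True, of "2::nat"] by simp
  next
    case False
    then obtain n where n: "m = Suc n" by (cases m) auto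
    then have "n < (LEAST m. K \<le> 2 ^ m)"
      by (simp add: m_def)
    then have "\<not> K \<le> 2 ^ n"
      by (rule not_less_Least)
    then show ?thesis
      using that[of m] False K_le n by simp
  qed
qed

lemma total_shift_prob_le:
  assumes K: "2 \<le> K" and q: "2 * real K ^ 3 \<le> q" and d: "real d \<le> 4 * real K"
  shows "real (K + 1) * (diag_prob q + real d * axis_prob q) \<le> 1"
proof -
  have "0 < 2 * real K ^ 3"
    using K by simp
  then have q_pos: "0 < q"
    using q by linarith
  have "2 * real K \<le> (real K)\<^sup>2" "2 * (real K)\<^sup>2 \<le> real K ^ 3"
    using K by (simp_all add: power2_eq_square power3_eq_cube)
  then have "36 * (real K)\<^sup>2 + 397 * real K + 361 \<le> 180 * real K ^ 3"
    using K by linarith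
  then have cubic: "(real K + 1) * (361 / 90 + 4 * real K / 10) \<le> 2 * real K ^ 3"
    by (simp add: field_simps power2_eq_square power3_eq_cube)
  have "real (K + 1) * (diag_prob q + real d * axis_prob q) = (real K + 1) * (361 / 90 + real d / 10) / q"
    using q_pos by (simp add: diag_prob_def axis_prob_def field_simps)
  also have "\<dots> \<le> (real K + 1) * (361 / 90 + 4 * real K / 10) / q"
    using d q_pos by (intro divide_right_mono mult_left_mono) auto
  also have "\<dots> \<le> 1"
    using cubic q q_pos by simp
  finally show ?thesis .
qed

lemma hadamard_mixture_exists:
  assumes K: "2 \<le> K" and q: "2 * real K ^ 3 \<le> q"
  obtains d m F G where "hadamard_mixture q d m K F G"
proof -
  obtain m where m: "3 \<le> m" "K \<le> 2 ^ m" "2 ^ m \<le> 4 * K"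
    using exists_power_of_two_between[OF K] by blast
  have "0 < 2 * real K ^ 3"
    using K by simp
  then have q_pos: "0 < q"
    using q by linarith
  define d where "d = (2::nat) ^ m"
  have card_Pow_m: "card (Pow {..<m}) = d" and finite_Pow_m: "finite (Pow {..<m})"
    by (simp_all add: d_def card_Pow)
  obtain F where F: "bij_betw F {..<d} (Pow {..<m})"
    using finite_same_card_bij[OF finite_lessThan finite_Pow_m] card_Pow_m by auto
  have "card {..<K} \<le> card (Pow {..<m})"
    using card_Pow_m m(2) by (simp add: d_def)
  then obtain G where G: "G ` {..<K} \<subseteq> Pow {..<m}" "inj_on G {..<K}"
    using card_le_inj[OF finite_lessThan finite_Pow_m] by blast
  have "real d \<le> real (4 * K)"
    using m(3) unfolding d_def of_nat_le_iff .
  then have "real (K + 1) * (diag_prob q + real d * axis_prob q) \<le> 1"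
    using total_shift_prob_le[OF K q] by simp
  moreover have "8 \<le> d"
    using power_increasing[OF m(1), of "2::nat"] by (simp add: d_def)
  ultimately show ?thesis
    using that[of d m F G] F G K q_pos by (simp add: hadamard_mixture_def)
qed

theorem theorem4:
  shows "\<exists>C::real. C > 0 \<and>
    (\<forall>(K::nat) (q::real). K \<ge> 2 \<and> q \<ge> 2 * real K ^ 3 \<longrightarrow>
      (\<exists>(d::nat) (\<nu>::nat \<Rightarrow> point pmf) (\<sigma>::nat \<Rightarrow> real).
         mixture_model d K \<nu> \<sigma> \<and>
         ENR d K \<nu> \<sigma> = q \<and>
         (let \<alpha> = (1::real); \<beta> = sqrt q / 2 in
           (\<forall>i<d. \<beta> * mix_exp K \<nu> (\<lambda>x m. \<bar>x i - m i\<bar>)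
                    \<ge> sqrt (mix_exp K \<nu> (\<lambda>x m. \<bar>x i - m i\<bar>\<^sup>2))) \<and>
           (\<forall>(T::dtree) (med::bool list \<Rightarrow> point).
              num_leaves T = K \<and>
              (\<forall>p\<in>leaves T. \<exists>!k. k < K \<and> leaf_of T (comp_mean \<nu> k) = p) \<and>
              leaf_medians d K \<nu> T med
              \<longrightarrow> price d K \<nu> T med \<ge> C * (\<alpha> * \<beta> * ln (real K) / sqrt q)))))"
proof (intro exI[of _ "1 / 80"] conjI allI impI, goal_cases)
  case 1
  show ?case by simp
next
  case (2 K q)
  then obtain d m F G where "hadamard_mixture q d m K F G"
    by (metis hadamard_mixture_exists)
  then interpret hadamard_mixture q d m K F G .
  text \<open>The bound holds for arbitrary leaf centres.\<close>
  have price: "1 / 80 * (1 * (sqrt q / 2) * ln (real K) / sqrt q) \<le> price d K component T c"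
    if "\<forall>p\<in>leaves T. \<exists>!k. k < K \<and> leaf_of T (comp_mean component k) = p" for T c
  proof -
    interpret separating_tree q d m K F G T
      using that by unfold_locales (simp add: comp_mean_component)
    show ?thesis
      using price_ge[of c] q_pos by simp
  qed
  show ?case
    unfolding Let_def
    using mixture_model_component ENR_component
      scaled_mean_abs_dev_eq_rms_dev[THEN sym, THEN eq_refl] price
    by blast
qed

end
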